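(* Let $\lambda_{\max}=1$ and let $F:[0,1]\to\mathbb{R}_+$ be continuously differentiable with $F(0)=0$, such that $F(x)<F^\star$ for all $x\in[0,1)$ and $F'(1)>0$. Then there exist constants $c>0$ and $\varepsilon_0>0$ (depending on $F$) such that for every $\varepsilon\in(0,\varepsilon_0]$ and every stable control policy $\lambda:\mathbb{Z}_+\to[0,1]$ with regret $R(\lambda)\le\varepsilon$, we have $\mathbb{E}_\pi[\bar q]\ge c/\varepsilon$. That is, $q^\star(\varepsilon)=\Omega(1/\varepsilon)$.
   Context: A control policy is a function $\lambda:\mathbb{Z}_+\to[0,\lambda_{\max}]$; it defines a continuous-time birth–death chain on $\mathbb{Z}_+$ with rate $\lambda(q)$ from $q$ to $q+1$ and rate $1$ from $q$ to $q-1$ ($q\ge1$). Let $\mathcal S$ be the set of states reachable from $0$. The policy is stable if $\sum_{i\in\mathcal S}\prod_{q=0}^{i}\lambda(q)<\infty$ (positive recurrence on $\mathcal S$); then $\pi$ is the stationary distribution and $\bar q\sim\pi$. Define $F^\star=\sup\{\mathbb{E}_\alpha[F(X)]:\alpha$ a probability measure on $[0,\lambda_{\max}]$, $X\sim\alpha$, $\mathbb{E}_\alpha[X]\le1\}$, the regret $R(\lambda)=F^\star-\mathbb{E}_\pi[F(\lambda(\bar q))]$, and $q^\star(\varepsilon)=\inf\{\mathbb{E}_\pi[\bar q]: \lambda \text{ stable},\ R(\lambda)\le\varepsilon\}$. *)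

theory Defs
  imports "HOL-Probability.Probability"
begin

text \<open>A control policy is a function lam :: nat => real with values in [0, lmax].
  Birth rate lam q from q to q+1, death rate 1 from q to q-1.\<close>

definition policy :: "real \<Rightarrow> (nat \<Rightarrow> real) \<Rightarrow> bool" where
  "policy lmax lam \<longleftrightarrow> (\<forall>q. 0 \<le> lam q \<and> lam q \<le> lmax)"

definition reach :: "(nat \<Rightarrow> real) \<Rightarrow> nat set" where
  "reach lam = {i. \<forall>q<i. lam q > 0}"

definition stable :: "(nat \<Rightarrow> real) \<Rightarrow> bool" where
  "stable lam \<longleftrightarrow> (\<lambda>i. \<Prod>q\<le>i. lam q) summable_on reach lam"

definition stationary_dist :: "(nat \<Rightarrow> real) \<Rightarrow> (nat \<Rightarrow> real) \<Rightarrow> bool" where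
  "stationary_dist lam \<pi> \<longleftrightarrow>
     (\<forall>i. 0 \<le> \<pi> i) \<and> (\<forall>i. i \<notin> reach lam \<longrightarrow> \<pi> i = 0) \<and>
     \<pi> sums 1 \<and>
     \<pi> 0 * lam 0 = \<pi> 1 \<and>
     (\<forall>j\<ge>1. \<pi> j * (lam j + 1) = \<pi> (j - 1) * lam (j - 1) + \<pi> (j + 1))"

definition Fstar :: "real \<Rightarrow> (real \<Rightarrow> real) \<Rightarrow> real" where
  "Fstar lmax F = (SUP \<alpha> \<in> {\<alpha>. prob_space \<alpha> \<and> space \<alpha> = {0..lmax} \<and>
                        sets \<alpha> = sets (restrict_space borel {0..lmax}) \<and>
                        (\<integral>x. x \<partial>\<alpha>) \<le> 1}.
                   (\<integral>x. F x \<partial>\<alpha>))"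

definition regret :: "real \<Rightarrow> (real \<Rightarrow> real) \<Rightarrow> (nat \<Rightarrow> real) \<Rightarrow> (nat \<Rightarrow> real) \<Rightarrow> real" where
  "regret lmax F lam \<pi> = Fstar lmax F - (\<Sum>i. \<pi> i * F (lam i))"

definition mean_queue :: "(nat \<Rightarrow> real) \<Rightarrow> ennreal" where
  "mean_queue \<pi> = (\<Sum>i. ennreal (real i * \<pi> i))"

end

theory Submission
  imports Defs
begin

text \<open>By detailed balance the stationary throughput is \<open>\<Sum> \<pi> i * lam i = 1 - \<pi> 0\<close>.
  Since \<open>F'(1) > 0\<close> and \<open>F < F\<^sup>\<star>\<close> on \<open>[0,1)\<close>, the reward lies below the line
  \<open>F x \<le> F\<^sup>\<star> - k (1 - x)\<close>, so a regret of at most \<open>\<epsilon>\<close> forces \<open>\<pi> 0 \<le> \<epsilon>/k\<close>.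
  With \<open>lam \<le> 1\<close> the stationary distribution is nonincreasing, hence every state has
  probability at most \<open>\<epsilon>/k\<close>, and at least half of the mass sits above \<open>N \<approx> k/(2\<epsilon>)\<close>:
  the mean queue length is at least \<open>k/(8\<epsilon>)\<close>.\<close>

lemma has_real_derivative_left_gap:
  fixes f :: "real \<Rightarrow> real"
  assumes "(f has_real_derivative D) (at b within {a..b})" and "d < D"
  shows "\<exists>\<delta>>0. \<forall>x\<in>{a..b}. b - \<delta> < x \<longrightarrow> d * (b - x) \<le> f b - f x"
proof -
  have "((\<lambda>y. (f y - f b) / (y - b)) \<longlongrightarrow> D) (at b within {a..b})"
    using assms(1) unfolding has_field_derivative_iff .
  then have "eventually (\<lambda>y. d < (f y - f b) / (y - b)) (at b within {a..b})"
    using assms(2) by (rule order_tendstoD)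
  then obtain \<delta> where "\<delta> > 0"
    and quot: "\<And>y. y \<in> {a..b} \<Longrightarrow> y \<noteq> b \<Longrightarrow> dist y b < \<delta> \<Longrightarrow> d < (f y - f b) / (y - b)"
    unfolding eventually_at by auto
  have "d * (b - x) \<le> f b - f x" if "x \<in> {a..b}" "b - \<delta> < x" for x
  proof (cases "x = b")
    case False
    with that have "x < b" "dist x b < \<delta>" by (auto simp: dist_real_def)
    moreover have "(f x - f b) / (x - b) = (f b - f x) / (b - x)"
      by (simp add: divide_simps) (auto simp: algebra_simps)
    ultimately show ?thesis
      using quot[OF that(1) False] by (simp add: field_simps)
  qed simp
  with \<open>\<delta> > 0\<close> show ?thesis by blast
qed

lemma below_sup_linear_gap:
  fixes f :: "real \<Rightarrow> real"
  assumes "a < b" and cont: "continuous_on {a..b} f"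
    and deriv: "(f has_real_derivative D) (at b within {a..b})" and "D > 0"
    and below: "\<forall>x\<in>{a..<b}. f x < S"
  shows "\<exists>k>0. \<forall>x\<in>{a..b}. f x \<le> S - k * (b - x)"
proof -
  have "closed {x \<in> {a..b}. f x \<le> S}"
    using cont by (intro continuous_on_closed_Collect_le) auto
  moreover have "{a..<b} \<subseteq> {x \<in> {a..b}. f x \<le> S}"
    using below by (auto simp: less_imp_le)
  ultimately have "closure {a..<b} \<subseteq> {x \<in> {a..b}. f x \<le> S}"
    by (intro closure_minimal)
  then have fb: "f b \<le> S"
    using \<open>a < b\<close> by (auto dest!: subsetD[of _ _ b])
  obtain \<delta> where "\<delta> > 0" and near: "\<forall>x\<in>{a..b}. b - \<delta> < x \<longrightarrow> D / 2 * (b - x) \<le> f b - f x"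
    using has_real_derivative_left_gap[OF deriv, of "D / 2"] \<open>D > 0\<close> by auto
  define c where "c = max a (b - \<delta> / 2)"
  have "a \<le> c" "c < b"
    using \<open>a < b\<close> \<open>\<delta> > 0\<close> by (auto simp: c_def)
  moreover have "continuous_on {a..c} f"
    using cont by (rule continuous_on_subset) (use \<open>c < b\<close> in auto)
  ultimately obtain x0 where "x0 \<in> {a..c}" and x0_max: "\<forall>y\<in>{a..c}. f y \<le> f x0"
    using continuous_attains_sup[of "{a..c}" f] by auto
  define m where "m = S - f x0"
  have "m > 0"
    using \<open>x0 \<in> {a..c}\<close> \<open>c < b\<close> below by (auto simp: m_def)
  define k where "k = min (D / 2) (m / (b - a))"
  have "k > 0"
    using \<open>m > 0\<close> \<open>D > 0\<close> \<open>a < b\<close> by (simp add: k_def)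
  have k_le: "k \<le> D / 2" "k \<le> m / (b - a)"
    unfolding k_def by (rule min.cobounded1, rule min.cobounded2)
  have "f x \<le> S - k * (b - x)" if x: "x \<in> {a..b}" for x
  proof (cases "x \<le> c")
    case True
    have "k * (b - x) \<le> m / (b - a) * (b - a)"
      using x \<open>k > 0\<close> k_le by (intro mult_mono) auto
    also have "\<dots> = m"
      using \<open>a < b\<close> by simp
    moreover have "f x \<le> f x0"
      using x0_max x True by auto
    ultimately show ?thesis
      by (simp add: m_def)
  next
    case False
    then have "D / 2 * (b - x) \<le> f b - f x"
      using near x \<open>\<delta> > 0\<close> by (auto simp: c_def)
    moreover have "k * (b - x) \<le> D / 2 * (b - x)"
      using x k_le by (intro mult_right_mono) auto
    ultimately show ?thesis
      using fb by linarith
  qed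
  with \<open>k > 0\<close> show ?thesis by blast
qed

lemma stationary_dist_detailed_balance:
  assumes "stationary_dist lam \<pi>"
  shows "\<pi> (Suc i) = \<pi> i * lam i"
proof (induction i)
  case 0
  then show ?case
    using assms by (simp add: stationary_dist_def)
next
  case (Suc i)
  have "\<forall>j\<ge>1. \<pi> j * (lam j + 1) = \<pi> (j - 1) * lam (j - 1) + \<pi> (j + 1)"
    using assms by (simp add: stationary_dist_def)
  then have "\<pi> (Suc i) * (lam (Suc i) + 1) = \<pi> i * lam i + \<pi> (Suc (Suc i))"
    by (simp add: spec[of _ "Suc i"])
  with Suc show ?case
    by (simp add: algebra_simps)
qed

lemma stationary_dist_throughput:
  assumes "stationary_dist lam \<pi>"
  shows "(\<lambda>i. \<pi> i * lam i) sums (1 - \<pi> 0)"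
proof -
  have "\<pi> sums 1"
    using assms by (simp add: stationary_dist_def)
  then have "(\<lambda>i. \<pi> (Suc i)) sums (1 - \<pi> 0)"
    using sums_Suc_iff[of \<pi> "1 - \<pi> 0"] by simp
  then show ?thesis
    by (simp add: stationary_dist_detailed_balance[OF assms])
qed

lemma stationary_dist_decseq:
  assumes "stationary_dist lam \<pi>" and "policy 1 lam"
  shows "decseq \<pi>"
proof (rule decseq_SucI)
  fix i
  have "\<pi> i * lam i \<le> \<pi> i"
    using assms unfolding stationary_dist_def policy_def by (simp add: mult_left_le)
  then show "\<pi> (Suc i) \<le> \<pi> i"
    by (simp add: stationary_dist_detailed_balance[OF assms(1)])
qed

lemma stationary_reward_le:
  fixes F :: "real \<Rightarrow> real"
  assumes "stationary_dist lam \<pi>" and "policy 1 lam"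
    and F_bounds: "\<forall>x\<in>{0..1}. 0 \<le> F x \<and> F x \<le> S - k * (1 - x)"
  shows "(\<Sum>i. \<pi> i * F (lam i)) \<le> S - k * \<pi> 0"
proof -
  have \<pi>_nonneg: "0 \<le> \<pi> i" and lam: "lam i \<in> {0..1}" for i
    using assms(1,2) by (auto simp: stationary_dist_def policy_def)
  define g where "g i = S * \<pi> i - k * (\<pi> i - \<pi> i * lam i)" for i
  have "g sums (S * 1 - k * (1 - (1 - \<pi> 0)))"
    unfolding g_def using assms(1) stationary_dist_throughput[OF assms(1)]
    by (intro sums_diff sums_mult sums_diff) (auto simp: stationary_dist_def)
  then have g_sums: "g sums (S - k * \<pi> 0)"
    by simp
  have reward_le_g: "\<pi> i * F (lam i) \<le> g i" for i
  proof -
    have "\<pi> i * F (lam i) \<le> \<pi> i * (S - k * (1 - lam i))"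
      using F_bounds lam[of i] \<pi>_nonneg[of i] by (intro mult_left_mono) auto
    then show ?thesis
      by (simp add: g_def algebra_simps)
  qed
  have norm_le: "norm (\<pi> i * F (lam i)) \<le> g i" for i
  proof -
    have "0 \<le> F (lam i)"
      using F_bounds lam[of i] by blast
    then show ?thesis
      using reward_le_g[of i] \<pi>_nonneg[of i] by simp
  qed
  have "summable (\<lambda>i. \<pi> i * F (lam i))"
    by (rule summable_comparison_test'[OF sums_summable[OF g_sums] norm_le])
  then have "(\<Sum>i. \<pi> i * F (lam i)) \<le> (\<Sum>i. g i)"
    by (rule suminf_le[OF reward_le_g _ sums_summable[OF g_sums]])
  then show ?thesis
    using g_sums by (simp add: sums_iff)
qed

lemma mean_queue_ge_tail_mass:
  assumes \<pi>_nonneg: "\<forall>i. 0 \<le> \<pi> i" and "\<pi> sums 1" and \<pi>_le: "\<forall>i. \<pi> i \<le> p"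
  shows "ennreal (real N * (1 - real N * p)) \<le> mean_queue \<pi>"
proof -
  define h where "h i = (if i < N then 0 else real N * \<pi> i)" for i
  have "(\<lambda>i. real N * \<pi> i - (if i \<in> {..<N} then real N * \<pi> i else 0))
          sums (real N * 1 - (\<Sum>i<N. real N * \<pi> i))"
    using \<open>\<pi> sums 1\<close> by (intro sums_diff sums_mult sums_If_finite_set) auto
  moreover have "h = (\<lambda>i. real N * \<pi> i - (if i \<in> {..<N} then real N * \<pi> i else 0))"
    by (auto simp: h_def)
  moreover have "real N * 1 - (\<Sum>i<N. real N * \<pi> i) = real N * (1 - (\<Sum>i<N. \<pi> i))"
    by (simp add: sum_distrib_left algebra_simps)
  ultimately have h_sums: "h sums (real N * (1 - (\<Sum>i<N. \<pi> i)))"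
    by simp
  have "(\<Sum>i<N. \<pi> i) \<le> real N * p"
    using sum_bounded_above[of "{..<N}" \<pi> p] \<pi>_le by simp
  then have "real N * (1 - real N * p) \<le> real N * (1 - (\<Sum>i<N. \<pi> i))"
    by (intro mult_left_mono) auto
  also have "\<dots> = (\<Sum>i. h i)"
    using h_sums by (simp add: sums_iff)
  finally have "ennreal (real N * (1 - real N * p)) \<le> ennreal (\<Sum>i. h i)"
    by (rule ennreal_leI)
  also have "\<dots> = (\<Sum>i. ennreal (h i))"
    using \<pi>_nonneg by (intro suminf_ennreal2[symmetric] sums_summable[OF h_sums]) (auto simp: h_def)
  also have "\<dots> \<le> mean_queue \<pi>"
    unfolding mean_queue_def using \<pi>_nonneg
    by (intro suminf_le) (auto simp: h_def intro!: ennreal_leI mult_right_mono)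
  finally show ?thesis .
qed

lemma mean_queue_ge_inverse:
  assumes "\<forall>i. 0 \<le> \<pi> i" and "\<pi> sums 1" and "\<forall>i. \<pi> i \<le> p" and "0 < p" and "p \<le> 1 / 2"
  shows "ennreal (1 / (8 * p)) \<le> mean_queue \<pi>"
proof -
  define x where "x = 1 / (2 * p)"
  have "1 \<le> x"
    using assms(4,5) by (simp add: x_def field_simps)
  define N where "N = nat \<lfloor>x\<rfloor>"
  have "real N = of_int \<lfloor>x\<rfloor>" "1 \<le> real_of_int \<lfloor>x\<rfloor>"
    using \<open>1 \<le> x\<close> by (simp_all add: N_def one_le_floor)
  then have "x / 2 \<le> real N" "real N \<le> x"
    by linarith+
  then have "real N * p \<le> 1 / 2"
    using assms(4) by (simp add: x_def field_simps)
  then have "real N * (1 / 2) \<le> real N * (1 - real N * p)"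
    by (intro mult_left_mono) auto
  moreover have "1 / (8 * p) = x / 4"
    by (simp add: x_def)
  ultimately have "1 / (8 * p) \<le> real N * (1 - real N * p)"
    using \<open>x / 2 \<le> real N\<close> by linarith
  then have "ennreal (1 / (8 * p)) \<le> ennreal (real N * (1 - real N * p))"
    by (rule ennreal_leI)
  also have "\<dots> \<le> mean_queue \<pi>"
    using mean_queue_ge_tail_mass assms(1-3) .
  finally show ?thesis .
qed

theorem proposition5p1:
  fixes F :: "real \<Rightarrow> real"
  assumes nonneg: "\<forall>x\<in>{0..1}. 0 \<le> F x"
    and C1: "\<exists>F'. (\<forall>x\<in>{0..1}. (F has_real_derivative F' x) (at x within {0..1}))
                 \<and> continuous_on {0..1} F' \<and> F' 1 > 0"
    and F0: "F 0 = 0"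
    and below: "\<forall>x\<in>{0..<1}. F x < Fstar 1 F"
  shows "\<exists>c>0. \<exists>\<epsilon>0>0. \<forall>\<epsilon>. 0 < \<epsilon> \<and> \<epsilon> \<le> \<epsilon>0 \<longrightarrow>
           (\<forall>lam \<pi>. policy 1 lam \<and> stable lam \<and> stationary_dist lam \<pi> \<and>
                     regret 1 F lam \<pi> \<le> \<epsilon> \<longrightarrow> ennreal (c / \<epsilon>) \<le> mean_queue \<pi>)"
proof -
  obtain F' where deriv: "\<forall>x\<in>{0..1}. (F has_real_derivative F' x) (at x within {0..1})"
    and "F' 1 > 0"
    using C1 by blast
  have "continuous_on {0..1} F"
    using deriv by (intro DERIV_continuous_on) auto
  then obtain k where "k > 0" and gap: "\<forall>x\<in>{0..1}. F x \<le> Fstar 1 F - k * (1 - x)"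
    using below_sup_linear_gap[of 0 1 F "F' 1" "Fstar 1 F"] deriv \<open>F' 1 > 0\<close> below by auto
  have "ennreal ((k / 8) / \<epsilon>) \<le> mean_queue \<pi>"
    if "0 < \<epsilon>" "\<epsilon> \<le> k / 2" "policy 1 lam" "stationary_dist lam \<pi>" "regret 1 F lam \<pi> \<le> \<epsilon>"
    for \<epsilon> lam \<pi>
  proof -
    have "k * \<pi> 0 \<le> \<epsilon>"
      using stationary_reward_le[OF that(4,3), of F "Fstar 1 F" k] gap nonneg that(5)
      by (auto simp: regret_def)
    then have "\<pi> 0 \<le> \<epsilon> / k"
      using \<open>k > 0\<close> by (simp add: field_simps)
    moreover have "\<pi> i \<le> \<pi> 0" for i
      using stationary_dist_decseq[OF that(4,3)] by (simp add: decseqD)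
    ultimately have "\<forall>i. \<pi> i \<le> \<epsilon> / k"
      by (blast intro: order_trans)
    then have "ennreal (1 / (8 * (\<epsilon> / k))) \<le> mean_queue \<pi>"
      using that(1,2,4) \<open>k > 0\<close>
      by (intro mean_queue_ge_inverse) (auto simp: stationary_dist_def field_simps)
    then show ?thesis
      by (simp add: field_simps)
  qed
  then show ?thesis
    using \<open>k > 0\<close> by (intro exI[of _ "k / 8"] conjI exI[of _ "k / 2"]) auto
qed

end
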